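(* Let $G$ be a (possibly infinite) cyclic graph with vertex set $V$. For every $v\in V$, \[ \mathrm{wf}(G)=\lim_{m\to\infty}\frac{\gamma_m(v)}{m}. \]
   Context: $S^1=\mathbb{R}/\mathbb{Z}$; $\preceq$/$\prec$ denote clockwise cyclic order; $\vec d(p,q)\in[0,1)$ is the clockwise distance from $p$ to $q$. A directed graph has no loops and no pair of opposite edges; $N^+[G,v]=\{v\}\cup\{w:v\to w\}$. A directed graph with vertex set $V\subseteq S^1$ is cyclic if whenever $v\to u$ is an edge, $v\to w$ and $w\to u$ are edges for all $w\in V$ with $v\prec w\prec u\prec v$. For $0\le k<n/2$, $C_n^k$ is the cyclic graph on $\{0,\dots,n-1\}$ with edges $i\to i+s\bmod n$, $1\le s\le k$. A cyclic homomorphism is a directed-graph homomorphism (edges map to edges or collapse) weakly preserving cyclic order and non-constant when the domain has a directed cycle. For finite cyclic $G$, $\mathrm{wf}(G)=\sup\{k/n:\exists$ cyclic homomorphism $C_n^k\to G\}$; for arbitrary cyclic $G$, $\mathrm{wf}(G)=\sup\{\mathrm{wf}(G[W]):W\subseteq V$ finite$\}$. For $m\ge1$ and $v_0\in V$, $\gamma_m(v_0)=\sup\{\sum_{i=0}^{m-1}\vec d(v_i,v_{i+1}) : v_1,\dots,v_m\in V,\ v_{i+1}\in N^+[G,v_i]\}$ (the supremum of total clockwise length of length-$m$ directed walks from $v_0$, where staying put is allowed). *)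

theory Defs
  imports Complex_Main
begin

text \<open>Points of the circle S^1 = R/Z are represented by their unique
  representatives in [0,1). A graph is given by a vertex set V and an edge
  relation E.\<close>

definition on_circle :: "real set \<Rightarrow> bool" where
  "on_circle V \<longleftrightarrow> V \<subseteq> {0..<1}"

definition cdist :: "real \<Rightarrow> real \<Rightarrow> real" where
  "cdist p q = frac (q - p)"

text \<open>Weak clockwise cyclic order p \<preceq> q \<preceq> r (\<preceq> p).\<close>
definition cw_le :: "real \<Rightarrow> real \<Rightarrow> real \<Rightarrow> bool" where
  "cw_le p q r \<longleftrightarrow> cdist p q + cdist q r + cdist r p \<le> 1"

definition cw_lt :: "real \<Rightarrow> real \<Rightarrow> real \<Rightarrow> bool" where
  "cw_lt p q r \<longleftrightarrow> p \<noteq> q \<and> q \<noteq> r \<and> r \<noteq> p \<and> cw_le p q r"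

definition digraph :: "real set \<Rightarrow> (real \<Rightarrow> real \<Rightarrow> bool) \<Rightarrow> bool" where
  "digraph V E \<longleftrightarrow> on_circle V \<and>
     (\<forall>x y. E x y \<longrightarrow> x \<in> V \<and> y \<in> V) \<and>
     (\<forall>x. \<not> E x x) \<and> (\<forall>x y. E x y \<longrightarrow> \<not> E y x)"

definition cyclic_graph :: "real set \<Rightarrow> (real \<Rightarrow> real \<Rightarrow> bool) \<Rightarrow> bool" where
  "cyclic_graph V E \<longleftrightarrow> digraph V E \<and>
     (\<forall>v\<in>V. \<forall>u\<in>V. \<forall>w\<in>V. E v u \<and> cw_lt v w u \<longrightarrow> E v w \<and> E w u)"

definition Cverts :: "nat \<Rightarrow> real set" where
  "Cverts n = {real i / real n | i. i < n}"

definition Cedge :: "nat \<Rightarrow> nat \<Rightarrow> real \<Rightarrow> real \<Rightarrow> bool" where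
  "Cedge n k x y \<longleftrightarrow> (\<exists>i s. i < n \<and> 1 \<le> s \<and> s \<le> k \<and>
      x = real i / real n \<and> y = real ((i + s) mod n) / real n)"

definition has_dcycle :: "real set \<Rightarrow> (real \<Rightarrow> real \<Rightarrow> bool) \<Rightarrow> bool" where
  "has_dcycle V E \<longleftrightarrow> (\<exists>v\<in>V. (v, v) \<in> {(a, b). E a b}\<^sup>+)"

definition cyclic_hom ::
  "real set \<Rightarrow> (real \<Rightarrow> real \<Rightarrow> bool) \<Rightarrow> real set \<Rightarrow> (real \<Rightarrow> real \<Rightarrow> bool)
   \<Rightarrow> (real \<Rightarrow> real) \<Rightarrow> bool" where
  "cyclic_hom V1 E1 V2 E2 f \<longleftrightarrow>
     (\<forall>x\<in>V1. f x \<in> V2) \<and>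
     (\<forall>x y. E1 x y \<longrightarrow> E2 (f x) (f y) \<or> f x = f y) \<and>
     (\<forall>x\<in>V1. \<forall>y\<in>V1. \<forall>z\<in>V1. cw_le x y z \<longrightarrow> cw_le (f x) (f y) (f z)) \<and>
     (has_dcycle V1 E1 \<longrightarrow> (\<exists>x\<in>V1. \<exists>y\<in>V1. f x \<noteq> f y))"

definition wf_fin :: "real set \<Rightarrow> (real \<Rightarrow> real \<Rightarrow> bool) \<Rightarrow> real" where
  "wf_fin V E = Sup {real k / real n | n k. 2 * k < n \<and>
      (\<exists>f. cyclic_hom (Cverts n) (Cedge n k) V E f)}"

definition induced :: "(real \<Rightarrow> real \<Rightarrow> bool) \<Rightarrow> real set \<Rightarrow> real \<Rightarrow> real \<Rightarrow> bool" where
  "induced E W x y \<longleftrightarrow> x \<in> W \<and> y \<in> W \<and> E x y"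

text \<open>Winding fraction of an arbitrary cyclic graph (sup over nonempty finite
  induced subgraphs; the empty subgraph contributes nothing).\<close>
definition wf :: "real set \<Rightarrow> (real \<Rightarrow> real \<Rightarrow> bool) \<Rightarrow> real" where
  "wf V E = Sup {wf_fin W (induced E W) | W. finite W \<and> W \<subseteq> V \<and> W \<noteq> {}}"

definition gamma :: "real set \<Rightarrow> (real \<Rightarrow> real \<Rightarrow> bool) \<Rightarrow> nat \<Rightarrow> real \<Rightarrow> real" where
  "gamma V E m v = Sup {(\<Sum>i<m. cdist (w i) (w (Suc i))) | w.
      w 0 = v \<and> (\<forall>i<m. w (Suc i) \<in> V \<and> (w (Suc i) = w i \<or> E (w i) (w (Suc i))))}"

end

theory Submission
  imports Defs
begin

text \<open>
  Lift walks on the circle to monotone paths in \<open>\<real>\<close>; the total clockwise length of a walk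
  is the displacement of its lift.

  Upper bound: inside a finite subgraph \<open>W\<close>, let \<open>greedy x\<close> be the farthest lift, less than one
  turn ahead of \<open>x\<close>, of a closed out-neighbour of \<open>frac x\<close>. Because \<open>G\<close> is cyclic, \<open>greedy\<close> is
  monotone; it also commutes with integer translations, so \<open>greedy\<^sup>m v - v\<close> bounds every walk of
  length \<open>m\<close> from \<open>v\<close> and is superadditive up to an error of \<open>1\<close>. If \<open>greedy\<^sup>m v - v \<ge> k + 2\<close>, the
  lower envelope \<open>F i = min\<^sub>a (greedy\<^sup>a v - \<lfloor>(a k - i) / m\<rfloor>)\<close> satisfies \<open>F (i + m) = F i + 1\<close> and
  \<open>F (i + k) \<le> greedy (F i)\<close>, hence \<open>i \<mapsto> frac (F i)\<close> is a cyclic homomorphism \<open>C\<^sub>m\<^sup>k \<rightarrow> W\<close>. Thus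
  \<open>\<gamma>\<^sub>m(v) \<le> m wf(G) + 3\<close>.

  Lower bound: a cyclic homomorphism \<open>C\<^sub>n\<^sup>k \<rightarrow> W\<close> lifts to a monotone path that winds at least
  once every \<open>n\<close> steps and advances less than one turn every \<open>k\<close> steps. Sampling every \<open>k\<close>-th
  point gives a walk in \<open>G\<close> advancing at least \<open>k\<close> turns per \<open>n\<close> steps, and cyclicity lets
  every vertex \<open>v\<close> enter this walk in one step. Thus \<open>\<gamma>\<^sub>m(v) \<ge> \<lfloor>(m - 1) / n\<rfloor> k\<close>.
\<close>

lemma cdist_nonneg: "0 \<le> cdist p q"
  by (simp add: cdist_def)

lemma cdist_less_1: "cdist p q < 1"
  by (simp add: cdist_def frac_lt_1)

lemma cdist_self [simp]: "cdist p p = 0"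
  by (simp add: cdist_def)

lemma frac_add_of_nat [simp]: "frac (x + of_nat n) = frac x"
  using frac_add_of_int_right[of x "int n"] by simp

lemma frac_diff_of_int [simp]: "frac (x - of_int n) = frac x"
  using frac_add_of_int_right[of x "- n"] by simp

lemma cdist_frac_frac:
  assumes "x \<le> y" "y < x + 1"
  shows "cdist (frac x) (frac y) = y - x"
proof -
  have "frac y - frac x = (y - x) + of_int (\<lfloor>x\<rfloor> - \<lfloor>y\<rfloor>)"
    by (simp add: frac_def)
  then have "frac (frac y - frac x) = frac (y - x)"
    by (metis frac_add_of_int_right)
  also have "\<dots> = y - x"
    using assms by (simp add: frac_eq)
  finally show ?thesis
    by (simp add: cdist_def)
qed

lemma frac_add_cdist:
  assumes "b \<in> {0..<1}"
  shows "frac (x + cdist (frac x) b) = b"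
proof -
  have "frac (x + cdist (frac x) b) = frac (x + (b - frac x))"
    unfolding cdist_def by (simp only: frac_add_simps)
  also have "\<dots> = frac (b + of_int \<lfloor>x\<rfloor>)"
    by (simp add: frac_def algebra_simps)
  finally show ?thesis
    using assms by simp
qed

lemma cdist_unit_interval:
  "p \<in> {0..<1} \<Longrightarrow> q \<in> {0..<1} \<Longrightarrow> cdist p q = (if p \<le> q then q - p else q - p + 1)"
  unfolding cdist_def by (auto simp: frac_unique_iff)

lemma cdist_eq_0_iff: "p \<in> {0..<1} \<Longrightarrow> q \<in> {0..<1} \<Longrightarrow> cdist p q = 0 \<longleftrightarrow> p = q"
  by (auto simp: cdist_unit_interval)

lemma cw_le_iff_cdist:
  "p \<in> {0..<1} \<Longrightarrow> q \<in> {0..<1} \<Longrightarrow> r \<in> {0..<1} \<Longrightarrow>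
    cw_le p q r \<longleftrightarrow> p = r \<or> cdist p q \<le> cdist p r"
  unfolding cw_le_def by (auto simp: cdist_unit_interval)

lemma cw_le_same_ends: "cw_le p q p"
proof -
  have "frac (p - q) = frac (- (q - p))"
    by simp
  then show ?thesis
    unfolding cw_le_def cdist_def using frac_neg[of "q - p"] frac_lt_1[of "q - p"] by auto
qed

lemma cdist_via:
  "p \<in> {0..<1} \<Longrightarrow> q \<in> {0..<1} \<Longrightarrow> r \<in> {0..<1} \<Longrightarrow> r \<noteq> p \<Longrightarrow>
    cdist p q < cdist p r \<Longrightarrow> cdist r q = cdist r p + cdist p q"
  by (auto simp: cdist_unit_interval split: if_splits)

lemma cw_lt_frac:
  assumes "x < y" "y < z" "z < x + 1"
  shows "cw_lt (frac x) (frac y) (frac z)"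
proof -
  have frac_in: "frac u \<in> {0..<1}" for u :: real
    by (simp add: frac_lt_1)
  have dist: "cdist (frac x) (frac y) = y - x" "cdist (frac x) (frac z) = z - x"
    "cdist (frac y) (frac z) = z - y"
    using assms by (simp_all add: cdist_frac_frac)
  then have "frac x \<noteq> frac y" "frac y \<noteq> frac z" "frac z \<noteq> frac x"
    using assms cdist_eq_0_iff[OF frac_in frac_in, of x y] cdist_eq_0_iff[OF frac_in frac_in, of y z]
      cdist_eq_0_iff[OF frac_in frac_in, of x z] by auto
  then show ?thesis
    unfolding cw_lt_def using cw_le_iff_cdist[OF frac_in frac_in frac_in] dist assms by auto
qed

lemma cdist_grid:
  assumes "i < m" "j < m"
  shows "cdist (real i / real m) (real j / real m) = real_of_int ((int j - int i) mod int m) / real m"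
proof -
  define d where "d = int j - int i"
  have m: "real m > 0"
    using assms by simp
  have "d = int m * (d div int m) + d mod int m"
    by simp
  then have "real_of_int d = real m * of_int (d div int m) + of_int (d mod int m)"
    by (metis of_int_add of_int_mult of_int_of_nat_eq)
  then have split: "real j / real m - real i / real m = of_int (d mod int m) / real m + of_int (d div int m)"
    unfolding d_def using m by (simp add: field_simps)
  have "0 \<le> d mod int m" "d mod int m < int m"
    using assms by auto
  then have "0 \<le> real_of_int (d mod int m)" "real_of_int (d mod int m) < real m"
    by simp_all
  then have "of_int (d mod int m) / real m \<in> {0..<1}"
    using m by (simp add: field_simps)
  then show ?thesis
    unfolding cdist_def split d_def by simp
qed

lemma cdist_grid_mod:
  assumes "0 < n" "t < n"
  shows "cdist (real (a mod n) / real n) (real ((a + t) mod n) / real n) = real t / real n"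
proof -
  have "(int ((a + t) mod n) - int (a mod n)) mod int n = ((int a + int t) mod int n - int a mod int n) mod int n"
    by (simp add: zmod_int)
  also have "\<dots> = int t"
    using assms by (simp add: mod_diff_eq)
  finally show ?thesis
    using cdist_grid[of "a mod n" n "(a + t) mod n"] assms by simp
qed

lemma real_div_nat_ge:
  assumes "0 < m"
  shows "real a / real m - 1 \<le> real (a div m)"
proof -
  have "real a = real m * real (a div m) + real (a mod m)"
    by (metis mult_div_mod_eq of_nat_add of_nat_mult)
  moreover have "real (a mod m) < real m"
    using assms by simp
  ultimately show ?thesis
    using assms by (simp add: field_simps)
qed

lemma cyclic_graph_subset: "cyclic_graph V E \<Longrightarrow> V \<subseteq> {0..<1}"
  by (simp add: cyclic_graph_def digraph_def on_circle_def)

lemma cyclic_graph_asym: "cyclic_graph V E \<Longrightarrow> E x y \<Longrightarrow> \<not> E y x"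
  unfolding cyclic_graph_def digraph_def by blast

lemma cyclic_graph_between:
  "cyclic_graph V E \<Longrightarrow> v \<in> V \<Longrightarrow> u \<in> V \<Longrightarrow> w \<in> V \<Longrightarrow> E v u \<Longrightarrow> cw_lt v w u \<Longrightarrow>
    E v w \<and> E w u"
  unfolding cyclic_graph_def by blast

definition is_walk :: "real set \<Rightarrow> (real \<Rightarrow> real \<Rightarrow> bool) \<Rightarrow> nat \<Rightarrow> (nat \<Rightarrow> real) \<Rightarrow> bool" where
  "is_walk V E m w \<longleftrightarrow> (\<forall>i<m. w (Suc i) \<in> V \<and> (w (Suc i) = w i \<or> E (w i) (w (Suc i))))"

definition walk_length :: "nat \<Rightarrow> (nat \<Rightarrow> real) \<Rightarrow> real" where
  "walk_length m w = (\<Sum>i<m. cdist (w i) (w (Suc i)))"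

lemma gamma_eq_Sup_walk_length:
  "gamma V E m v = Sup {walk_length m w | w. w 0 = v \<and> is_walk V E m w}"
  by (simp add: gamma_def walk_length_def is_walk_def)

lemma walk_length_le: "walk_length m w \<le> real m"
proof -
  have "walk_length m w \<le> (\<Sum>i<m. 1)"
    unfolding walk_length_def by (intro sum_mono) (simp add: cdist_less_1 less_imp_le)
  then show ?thesis
    by simp
qed

lemma walk_length_le_gamma:
  assumes "w 0 = v" "is_walk V E m w"
  shows "walk_length m w \<le> gamma V E m v"
  unfolding gamma_eq_Sup_walk_length
  by (rule cSup_upper) (use assms walk_length_le in \<open>auto intro!: bdd_aboveI[of _ "real m"]\<close>)

lemma gamma_le_Sup_walk_length:
  assumes "v \<in> V" "\<And>w. w 0 = v \<Longrightarrow> is_walk V E m w \<Longrightarrow> walk_length m w \<le> B"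
  shows "gamma V E m v \<le> B"
  unfolding gamma_eq_Sup_walk_length
  by (rule cSup_least) (use assms in \<open>auto intro!: exI[of _ "\<lambda>_. v"] simp: is_walk_def\<close>)

lemma is_walk_in: "w 0 \<in> V \<Longrightarrow> is_walk V E m w \<Longrightarrow> i \<le> m \<Longrightarrow> w i \<in> V"
  unfolding is_walk_def by (cases i) auto

lemma frac_add_walk_length:
  assumes "\<And>i. i \<le> j \<Longrightarrow> w i \<in> {0..<1}"
  shows "frac (w 0 + walk_length j w) = w j"
  using assms
proof (induction j)
  case 0
  then show ?case
    by (simp add: walk_length_def)
next
  case (Suc j)
  then have "frac (w 0 + walk_length j w) = w j"
    by simp
  then show ?case
    using frac_add_cdist[OF Suc.prems[of "Suc j"], of "w 0 + walk_length j w"]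
    by (simp add: walk_length_def add.assoc)
qed

definition hom_fractions :: "real set \<Rightarrow> (real \<Rightarrow> real \<Rightarrow> bool) \<Rightarrow> real set" where
  "hom_fractions W E' =
    {real k / real n | n k. 2 * k < n \<and> (\<exists>f. cyclic_hom (Cverts n) (Cedge n k) W E' f)}"

definition subgraph_wfs :: "real set \<Rightarrow> (real \<Rightarrow> real \<Rightarrow> bool) \<Rightarrow> real set" where
  "subgraph_wfs V E = {wf_fin W (induced E W) | W. finite W \<and> W \<subseteq> V \<and> W \<noteq> {}}"

lemma wf_fin_eq_Sup: "wf_fin W E' = Sup (hom_fractions W E')"
  by (simp add: wf_fin_def hom_fractions_def)

lemma wf_eq_Sup: "wf V E = Sup (subgraph_wfs V E)"
  by (simp add: wf_def subgraph_wfs_def)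

lemma hom_fractions_le_half: "x \<in> hom_fractions W E' \<Longrightarrow> x \<le> 1 / 2"
  by (auto simp: hom_fractions_def field_simps)

lemma cyclic_hom_const:
  assumes "w \<in> W"
  shows "cyclic_hom (Cverts 1) (Cedge 1 0) W E' (\<lambda>_. w)"
proof -
  have no_edge: "\<not> Cedge 1 0 x y" for x y
    unfolding Cedge_def by auto
  then have "\<not> has_dcycle (Cverts 1) (Cedge 1 0)"
    by (simp add: has_dcycle_def)
  then show ?thesis
    unfolding cyclic_hom_def cw_le_def using assms no_edge by auto
qed

lemma zero_in_hom_fractions: "w \<in> W \<Longrightarrow> 0 \<in> hom_fractions W E'"
  unfolding hom_fractions_def
  by (rule CollectI, rule exI[of _ 1], rule exI[of _ 0]) (use cyclic_hom_const in auto)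

lemma bdd_above_hom_fractions: "bdd_above (hom_fractions W E')"
  using hom_fractions_le_half by (rule bdd_aboveI)

lemma hom_fraction_le_wf_fin:
  assumes "2 * k < n" "cyclic_hom (Cverts n) (Cedge n k) W E' f"
  shows "real k / real n \<le> wf_fin W E'"
  unfolding wf_fin_eq_Sup
  by (rule cSup_upper[OF _ bdd_above_hom_fractions]) (use assms in \<open>auto simp: hom_fractions_def\<close>)

lemma wf_fin_le_half: "w \<in> W \<Longrightarrow> wf_fin W E' \<le> 1 / 2"
  unfolding wf_fin_eq_Sup using zero_in_hom_fractions hom_fractions_le_half
  by (metis cSup_least empty_iff)

lemma bdd_above_subgraph_wfs: "bdd_above (subgraph_wfs V E)"
proof (rule bdd_aboveI)
  fix x assume "x \<in> subgraph_wfs V E"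
  then obtain W w where "x = wf_fin W (induced E W)" "w \<in> W"
    by (auto simp: subgraph_wfs_def)
  then show "x \<le> 1 / 2"
    using wf_fin_le_half by blast
qed

lemma wf_fin_le_wf:
  assumes "finite W" "W \<subseteq> V" "W \<noteq> {}"
  shows "wf_fin W (induced E W) \<le> wf V E"
  unfolding wf_eq_Sup
  by (rule cSup_upper[OF _ bdd_above_subgraph_wfs]) (use assms in \<open>auto simp: subgraph_wfs_def\<close>)

lemma wf_nonneg:
  assumes "v \<in> V"
  shows "0 \<le> wf V E"
proof -
  have "0 \<le> wf_fin {v} (induced E {v})"
    using hom_fraction_le_wf_fin[OF _ cyclic_hom_const[of v]] by fastforce
  also have "\<dots> \<le> wf V E"
    using assms by (intro wf_fin_le_wf) auto
  finally show ?thesis .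
qed

lemma less_wf_hom_fraction:
  assumes "a < wf V E" "v \<in> V"
  obtains W n k f where "W \<subseteq> V" "2 * k < n"
    "cyclic_hom (Cverts n) (Cedge n k) W (induced E W) f" "a < real k / real n"
proof -
  have "subgraph_wfs V E \<noteq> {}"
    using assms(2) by (auto simp: subgraph_wfs_def)
  then obtain W where W: "finite W" "W \<subseteq> V" "W \<noteq> {}" "a < wf_fin W (induced E W)"
    using assms(1) less_cSup_iff[OF _ bdd_above_subgraph_wfs]
    unfolding wf_eq_Sup subgraph_wfs_def by auto
  then obtain w where "w \<in> W"
    by blast
  then have "hom_fractions W (induced E W) \<noteq> {}"
    using zero_in_hom_fractions by blast
  then obtain x where "x \<in> hom_fractions W (induced E W)" "a < x"
    using W(4) less_cSup_iff[OF _ bdd_above_hom_fractions] unfolding wf_fin_eq_Sup by blast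
  then show ?thesis
    using that W(2) unfolding hom_fractions_def by blast
qed

section \<open>The greedy lift\<close>

locale greedy_lift =
  fixes V :: "real set" and E :: "real \<Rightarrow> real \<Rightarrow> bool" and W :: "real set"
  assumes cyclic: "cyclic_graph V E" and finite_W: "finite W" and W_subset: "W \<subseteq> V"
begin

lemma W_unit_interval: "w \<in> W \<Longrightarrow> w \<in> {0..<1}"
  using cyclic_graph_subset[OF cyclic] W_subset by blast

lemma between_W: "v \<in> W \<Longrightarrow> u \<in> W \<Longrightarrow> w \<in> W \<Longrightarrow> E v u \<Longrightarrow> cw_lt v w u \<Longrightarrow> E v w \<and> E w u"
  using cyclic_graph_between[OF cyclic] W_subset by blast

definition out_lifts :: "real \<Rightarrow> real set" where
  "out_lifts x = {y. frac y \<in> W \<and> x \<le> y \<and> y < x + 1 \<and> (y = x \<or> E (frac x) (frac y))}"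

definition greedy :: "real \<Rightarrow> real" where
  "greedy x = Max (out_lifts x)"

lemma finite_out_lifts: "finite (out_lifts x)"
proof -
  have "out_lifts x \<subseteq> (\<lambda>w. x + cdist (frac x) w) ` W"
  proof
    fix y assume "y \<in> out_lifts x"
    then have "frac y \<in> W" "x \<le> y" "y < x + 1"
      by (auto simp: out_lifts_def)
    then show "y \<in> (\<lambda>w. x + cdist (frac x) w) ` W"
      by (intro image_eqI[of _ _ "frac y"]) (simp_all add: cdist_frac_frac)
  qed
  then show ?thesis
    using finite_W finite_subset by blast
qed

lemma self_in_out_lifts: "frac x \<in> W \<Longrightarrow> x \<in> out_lifts x"
  by (simp add: out_lifts_def)

lemma greedy_in_out_lifts: "frac x \<in> W \<Longrightarrow> greedy x \<in> out_lifts x"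
  unfolding greedy_def using finite_out_lifts self_in_out_lifts by (metis Max_in empty_iff)

lemma le_greedy: "y \<in> out_lifts x \<Longrightarrow> y \<le> greedy x"
  unfolding greedy_def using finite_out_lifts by simp

lemma
  assumes "frac x \<in> W"
  shows greedy_ge: "x \<le> greedy x"
    and greedy_less: "greedy x < x + 1"
    and frac_greedy_in_W: "frac (greedy x) \<in> W"
    and greedy_eq_or_edge: "greedy x = x \<or> E (frac x) (frac (greedy x))"
  using greedy_in_out_lifts[OF assms] by (auto simp: out_lifts_def)

lemma out_lifts_translate: "y \<in> out_lifts x \<Longrightarrow> y + of_int j \<in> out_lifts (x + of_int j)"
  by (auto simp: out_lifts_def)

lemma greedy_translate:
  assumes "frac x \<in> W"
  shows "greedy (x + of_int j) = greedy x + of_int j"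
proof (rule antisym)
  have "frac (x + of_int j) \<in> W"
    using assms by simp
  from out_lifts_translate[OF greedy_in_out_lifts[OF this], of "- j"]
  have "greedy (x + of_int j) - of_int j \<in> out_lifts x"
    by simp
  then show "greedy (x + of_int j) \<le> greedy x + of_int j"
    using le_greedy by fastforce
  show "greedy x + of_int j \<le> greedy (x + of_int j)"
    using out_lifts_translate[OF greedy_in_out_lifts[OF assms]] le_greedy by blast
qed

lemma out_lifts_interval:
  assumes "frac x \<in> W" "frac y \<in> W" "x \<le> y" "y \<le> greedy x"
  shows "y \<in> out_lifts x"
proof -
  consider "y = x" | "y = greedy x" | "x < y" "y < greedy x"
    using assms by linarith
  then show ?thesis
  proof cases
    case 3
    then have edge: "E (frac x) (frac (greedy x))"
      using greedy_eq_or_edge[OF assms(1)] by auto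
    have "cw_lt (frac x) (frac y) (frac (greedy x))"
      using 3 greedy_less[OF assms(1)] by (intro cw_lt_frac) auto
    then have "E (frac x) (frac y)"
      using between_W[OF assms(1) frac_greedy_in_W[OF assms(1)] assms(2) edge] by blast
    then show ?thesis
      using 3 greedy_less[OF assms(1)] assms(2) unfolding out_lifts_def by auto
  qed (use assms self_in_out_lifts greedy_in_out_lifts in auto)
qed

lemma greedy_mono:
  assumes "frac x \<in> W" "frac y \<in> W" "x \<le> y"
  shows "greedy x \<le> greedy y"
proof (cases "greedy x \<le> y \<or> y = x")
  case True
  then show ?thesis
    using greedy_ge[OF assms(2)] by auto
next
  case False
  then have between: "x < y" "y < greedy x"
    using assms by auto
  then have edge: "E (frac x) (frac (greedy x))"
    using greedy_eq_or_edge[OF assms(1)] by auto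
  have "cw_lt (frac x) (frac y) (frac (greedy x))"
    using between greedy_less[OF assms(1)] by (intro cw_lt_frac) auto
  then have "E (frac y) (frac (greedy x))"
    using between_W[OF assms(1) frac_greedy_in_W[OF assms(1)] assms(2) edge] by blast
  then have "greedy x \<in> out_lifts y"
    using between greedy_less[OF assms(1)] frac_greedy_in_W[OF assms(1)]
    unfolding out_lifts_def by auto
  then show ?thesis
    by (rule le_greedy)
qed

lemma frac_greedy_pow_in_W: "frac x \<in> W \<Longrightarrow> frac ((greedy ^^ a) x) \<in> W"
  by (induction a) (auto simp: frac_greedy_in_W)

lemma greedy_pow_translate:
  "frac x \<in> W \<Longrightarrow> (greedy ^^ a) (x + of_int j) = (greedy ^^ a) x + of_int j"
  by (induction a) (auto simp: greedy_translate frac_greedy_pow_in_W)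

lemma greedy_pow_mono:
  "frac x \<in> W \<Longrightarrow> frac y \<in> W \<Longrightarrow> x \<le> y \<Longrightarrow> (greedy ^^ a) x \<le> (greedy ^^ a) y"
  by (induction a) (auto intro!: greedy_mono frac_greedy_pow_in_W)

lemma greedy_pow_ge: "frac x \<in> W \<Longrightarrow> x \<le> (greedy ^^ a) x"
  by (induction a) (auto intro: order_trans greedy_ge frac_greedy_pow_in_W)

lemma greedy_pow_le: "frac x \<in> W \<Longrightarrow> (greedy ^^ a) x \<le> x + real a"
proof (induction a)
  case (Suc a)
  then show ?case
    using greedy_less[OF frac_greedy_pow_in_W[OF Suc.prems, of a]] by simp
qed simp

lemma walk_length_le_greedy:
  assumes "w 0 = v" "v \<in> W" "is_walk W E m w"
  shows "walk_length m w \<le> (greedy ^^ m) v - v"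
proof -
  have w_in_W: "w i \<in> W" if "i \<le> m" for i
    using is_walk_in[OF _ assms(3) that] assms(1,2) by simp
  have frac_lift: "frac (v + walk_length j w) = w j" if "j \<le> m" for j
    using frac_add_walk_length[of j w] w_in_W W_unit_interval that assms(1) by simp
  have "v + walk_length j w \<le> (greedy ^^ j) v" if "j \<le> m" for j
    using that
  proof (induction j)
    case 0
    then show ?case
      by (simp add: walk_length_def)
  next
    case (Suc j)
    let ?x = "v + walk_length j w"
    have step: "w (Suc j) = w j \<or> E (w j) (w (Suc j))"
      using assms(3) Suc.prems unfolding is_walk_def by auto
    have lift_Suc: "v + walk_length (Suc j) w = ?x + cdist (w j) (w (Suc j))"
      by (simp add: walk_length_def)
    have "v + walk_length (Suc j) w \<in> out_lifts ?x"
      unfolding out_lifts_def lift_Suc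
      using frac_lift[of j] frac_lift[of "Suc j"] step w_in_W[OF Suc.prems] Suc.prems lift_Suc
        cdist_nonneg[of "w j" "w (Suc j)"] cdist_less_1[of "w j" "w (Suc j)"]
      by auto
    then have "v + walk_length (Suc j) w \<le> greedy ?x"
      by (rule le_greedy)
    also have "\<dots> \<le> greedy ((greedy ^^ j) v)"
      using Suc frac_lift[of j] w_in_W[of j] W_unit_interval[OF assms(2)] assms(2)
      by (intro greedy_mono frac_greedy_pow_in_W) auto
    finally show ?case
      by simp
  qed
  from this[of m] show ?thesis
    by simp
qed

lemma greedy_displacement_ge:
  assumes "frac v \<in> W" "frac y \<in> W"
  shows "(greedy ^^ m) v - v - 1 \<le> (greedy ^^ m) y - y"
proof -
  define j where "j = \<lceil>v - y\<rceil>"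
  have j: "v \<le> y + of_int j" "y + of_int j < v + 1"
    unfolding j_def by linarith+
  have "(greedy ^^ m) v \<le> (greedy ^^ m) (y + of_int j)"
    using assms j by (intro greedy_pow_mono) auto
  also have "\<dots> = (greedy ^^ m) y + of_int j"
    using assms by (simp add: greedy_pow_translate)
  finally show ?thesis
    using j by linarith
qed

lemma greedy_displacement_mult:
  assumes "frac v \<in> W" "frac y \<in> W"
  shows "real c * ((greedy ^^ m) v - v - 1) \<le> (greedy ^^ (c * m)) y - y"
proof (induction c)
  case (Suc c)
  have "(greedy ^^ (Suc c * m)) y = (greedy ^^ m) ((greedy ^^ (c * m)) y)"
    by (simp add: funpow_add)
  moreover have "(greedy ^^ m) v - v - 1 \<le> (greedy ^^ m) ((greedy ^^ (c * m)) y) - (greedy ^^ (c * m)) y"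
    using assms by (intro greedy_displacement_ge frac_greedy_pow_in_W)
  ultimately show ?case
    using Suc by (simp add: algebra_simps)
qed simp

lemma greedy_displacement_div:
  assumes "frac v \<in> W" "frac y \<in> W"
  shows "real (a div m) * ((greedy ^^ m) v - v - 1) \<le> (greedy ^^ a) y - y"
proof -
  have "(greedy ^^ a) y = (greedy ^^ (a mod m)) ((greedy ^^ (a div m * m)) y)"
    by (metis funpow_add o_apply mod_div_mult_eq)
  also have "\<dots> \<ge> (greedy ^^ (a div m * m)) y"
    using assms by (intro greedy_pow_ge frac_greedy_pow_in_W)
  finally show ?thesis
    using greedy_displacement_mult[OF assms, of "a div m" m] by linarith
qed

end

section \<open>A homomorphism from a large greedy displacement\<close>

locale greedy_hom = greedy_lift +
  fixes v :: real and m k :: nat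
  assumes v_in_W: "v \<in> W" and m_pos: "0 < m"
    and displacement: "real k + 2 \<le> (greedy ^^ m) v - v"
begin

lemma frac_v_in_W: "frac v \<in> W"
  using W_unit_interval[OF v_in_W] v_in_W by simp

definition offset :: "nat \<Rightarrow> int \<Rightarrow> int" where
  "offset a i = \<lfloor>(real a * real k - real_of_int i) / real m\<rfloor>"

definition candidate :: "nat \<Rightarrow> int \<Rightarrow> real" where
  "candidate a i = (greedy ^^ a) v - of_int (offset a i)"

definition horizon :: nat where
  "horizon = m * (k + 3)"

text \<open>The minimum is meant over all \<open>a\<close>; truncating it at \<open>horizon\<close> loses nothing
  (\<open>F_le_candidate\<close>).\<close>

definition F :: "int \<Rightarrow> real" where
  "F i = Min ((\<lambda>a. candidate a i) ` {..horizon})"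

definition f :: "real \<Rightarrow> real" where
  "f r = frac (F (round (r * real m)))"

lemma candidate_ge: "v + real a / real m - (real k + 1) + real_of_int i / real m \<le> candidate a i"
proof -
  have m: "real m > 0"
    using m_pos by simp
  have "real (a div m) * (real k + 1) \<le> real (a div m) * ((greedy ^^ m) v - v - 1)"
    using displacement by (intro mult_left_mono) auto
  also have "\<dots> \<le> (greedy ^^ a) v - v"
    using greedy_displacement_div[OF frac_v_in_W frac_v_in_W] .
  finally have walk: "real (a div m) * (real k + 1) \<le> (greedy ^^ a) v - v" .
  have "(real a / real m - 1) * (real k + 1) \<le> real (a div m) * (real k + 1)"
    using real_div_nat_ge[OF m_pos] by (intro mult_right_mono) auto
  moreover have "of_int (offset a i) \<le> (real a * real k - real_of_int i) / real m"
    unfolding offset_def by (rule of_int_floor_le)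
  moreover have "(real a / real m - 1) * (real k + 1) - (real a * real k - real_of_int i) / real m
      = real a / real m - (real k + 1) + real_of_int i / real m"
    using m by (simp add: field_simps)
  ultimately show ?thesis
    unfolding candidate_def using walk by linarith
qed

lemma candidate_0_le: "candidate 0 i \<le> v + real_of_int i / real m + 1"
proof -
  have "- real_of_int i / real m - 1 \<le> of_int (offset 0 i)"
    unfolding offset_def using real_of_int_floor_gt_diff_one[of "- real_of_int i / real m"] by simp
  then show ?thesis
    unfolding candidate_def by simp
qed

lemma F_le_candidate: "F i \<le> candidate a i"
proof (cases "a \<le> horizon")
  case True
  then show ?thesis
    unfolding F_def by (intro Min_le) auto
next
  case False
  have "real (m * (k + 3)) < real a"
    using False unfolding horizon_def by linarith
  then have "real k + 3 < real a / real m"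
    using m_pos by (simp add: field_simps)
  then have "candidate 0 i < candidate a i"
    using candidate_ge[of a i] candidate_0_le[of i] by linarith
  moreover have "F i \<le> candidate 0 i"
    unfolding F_def by (intro Min_le) auto
  ultimately show ?thesis
    by linarith
qed

lemma F_attained: obtains a where "F i = candidate a i"
proof -
  have "F i \<in> (\<lambda>a. candidate a i) ` {..horizon}"
    unfolding F_def by (intro Min_in) auto
  then show ?thesis
    using that by blast
qed

lemma frac_F_in_W: "frac (F i) \<in> W"
proof -
  obtain a where "F i = candidate a i"
    by (rule F_attained)
  then show ?thesis
    unfolding candidate_def using frac_greedy_pow_in_W[OF frac_v_in_W]
    by (metis diff_conv_add_uminus frac_add_of_int_right of_int_minus)
qed

lemma F_translate: "F (i + int m * c) = F i + of_int c"
proof -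
  have "(real a * real k - real_of_int (i + int m * c)) / real m
      = (real a * real k - real_of_int i) / real m + of_int (- c)" for a
    using m_pos by (simp add: field_simps)
  then have candidate: "candidate a (i + int m * c) = candidate a i + of_int c" for a
    unfolding candidate_def offset_def by simp
  show ?thesis
  proof (rule antisym)
    obtain a where "F i = candidate a i"
      by (rule F_attained)
    then show "F (i + int m * c) \<le> F i + of_int c"
      using F_le_candidate[of "i + int m * c" a] candidate by simp
  next
    obtain a where "F (i + int m * c) = candidate a (i + int m * c)"
      by (rule F_attained)
    then show "F i + of_int c \<le> F (i + int m * c)"
      using F_le_candidate[of i a] candidate by simp
  qed
qed

lemma F_mono:
  assumes "i \<le> j"
  shows "F i \<le> F j"
proof -
  obtain a where a: "F j = candidate a j"
    by (rule F_attained)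
  have "offset a j \<le> offset a i"
    unfolding offset_def using m_pos assms by (intro floor_mono divide_right_mono) auto
  then have "candidate a i \<le> candidate a j"
    unfolding candidate_def by simp
  then show ?thesis
    using F_le_candidate[of i a] a by linarith
qed

lemma F_add_k_le_greedy: "F (i + int k) \<le> greedy (F i)"
proof -
  obtain a where a: "F i = candidate a i"
    by (rule F_attained)
  have offset: "offset (Suc a) (i + int k) = offset a i"
    unfolding offset_def by (simp add: algebra_simps)
  have "greedy (candidate a i) = (greedy ^^ Suc a) v + of_int (- offset a i)"
    unfolding candidate_def
    using greedy_translate[OF frac_greedy_pow_in_W[OF frac_v_in_W, of a], of "- offset a i"] by simp
  also have "\<dots> = candidate (Suc a) (i + int k)"
    unfolding candidate_def offset by simp
  finally show ?thesis
    using F_le_candidate[of "i + int k" "Suc a"] a by simp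
qed

lemma F_in_out_lifts:
  assumes "0 \<le> s" "s \<le> int k"
  shows "F (i + s) \<in> out_lifts (F i)"
proof -
  have "F i \<le> F (i + s)" "F (i + s) \<le> F (i + int k)"
    using assms by (intro F_mono; simp)+
  then show ?thesis
    using F_add_k_le_greedy[of i] frac_F_in_W by (intro out_lifts_interval) auto
qed

lemma f_grid: "f (real j / real m) = frac (F (int j))"
  using m_pos unfolding f_def by simp

lemma f_grid_mod: "f (real (j mod m) / real m) = frac (F (int j))"
proof -
  have "int j = int (j mod m) + int m * int (j div m)"
    by (metis mod_mult_div_eq of_nat_add of_nat_mult)
  then show ?thesis
    unfolding f_grid using F_translate[of "int (j mod m)" "int (j div m)"] by simp
qed

lemma f_grid_rebase: "f (real j / real m) = frac (F (i + (int j - i) mod int m))"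
proof -
  have "i + (int j - i) mod int m = int j + int m * (- ((int j - i) div int m))"
    using minus_mult_div_eq_mod[of "int j - i" "int m"] by (simp add: algebra_simps)
  then show ?thesis
    unfolding f_grid using F_translate[of "int j" "- ((int j - i) div int m)"] by simp
qed

lemma f_maps_edges:
  assumes "Cedge m k x y"
  shows "induced E W (f x) (f y) \<or> f x = f y"
proof -
  obtain i s where edge: "i < m" "1 \<le> s" "s \<le> k" "x = real i / real m"
    "y = real ((i + s) mod m) / real m"
    using assms unfolding Cedge_def by blast
  have "F (int i + int s) \<in> out_lifts (F (int i))"
    using edge by (intro F_in_out_lifts) auto
  then have "F (int i + int s) = F (int i) \<or> E (frac (F (int i))) (frac (F (int i + int s)))"
    by (auto simp: out_lifts_def)
  moreover have "f x = frac (F (int i))" "f y = frac (F (int i + int s))"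
    using f_grid[of i] f_grid_mod[of "i + s"] edge by simp_all
  ultimately show ?thesis
    unfolding induced_def using frac_F_in_W by auto
qed

lemma F_cw_le:
  assumes "0 \<le> d" "d \<le> d'" "d' < int m"
  shows "cw_le (frac (F i)) (frac (F (i + d))) (frac (F (i + d')))"
proof -
  have frac_in: "frac u \<in> {0..<1}" for u :: real
    by (simp add: frac_lt_1)
  have mono: "F i \<le> F (i + d)" "F (i + d) \<le> F (i + d')"
    using assms by (intro F_mono; simp)+
  have "F (i + d') \<le> F (i + int m * 1)"
    using assms by (intro F_mono) auto
  then have turn: "F (i + d') \<le> F i + 1"
    using F_translate[of i 1] by simp
  show ?thesis
  proof (cases "F (i + d') = F i + 1")
    case True
    then have "frac (F (i + d')) = frac (F i)"
      by (simp add: frac_1_eq)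
    then show ?thesis
      using cw_le_iff_cdist[OF frac_in frac_in frac_in] by simp
  next
    case False
    with turn have "F (i + d') < F i + 1"
      by simp
    then show ?thesis
      using mono cw_le_iff_cdist[OF frac_in frac_in frac_in] by (simp add: cdist_frac_frac)
  qed
qed

lemma f_preserves_cw_le:
  assumes "x \<in> Cverts m" "y \<in> Cverts m" "z \<in> Cverts m" "cw_le x y z"
  shows "cw_le (f x) (f y) (f z)"
proof -
  obtain i j l where ijl: "i < m" "j < m" "l < m"
    "x = real i / real m" "y = real j / real m" "z = real l / real m"
    using assms(1-3) by (auto simp: Cverts_def)
  have grid: "real a / real m \<in> {0..<1}" if "a < m" for a
    using that by (simp add: field_simps)
  define dj where "dj = (int j - int i) mod int m"
  define dl where "dl = (int l - int i) mod int m"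
  have d: "0 \<le> dj" "0 \<le> dl" "dl < int m"
    using m_pos unfolding dj_def dl_def by auto
  have "x = z \<or> cdist x y \<le> cdist x z"
    using assms(4) cw_le_iff_cdist[OF grid grid grid] ijl by simp
  then have "i = l \<or> dj \<le> dl"
    using ijl m_pos cdist_grid[of i m j] cdist_grid[of i m l]
    unfolding dj_def dl_def by (auto simp: divide_le_cancel)
  moreover have "f x = frac (F (int i))" "f y = frac (F (int i + dj))" "f z = frac (F (int i + dl))"
    unfolding ijl(4-6) dj_def dl_def f_grid_rebase[of _ "int i"] by simp_all
  ultimately show ?thesis
    using F_cw_le[OF d(1) _ d(3), of "int i"] ijl cw_le_same_ends by auto
qed

lemma F_not_constant: obtains i where "i < m" "F (int i) < F (int i + 1)"
proof -
  have "\<exists>i<m. F (int i) \<noteq> F (int i + 1)"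
  proof (rule ccontr)
    assume "\<not> ?thesis"
    then have "i \<le> m \<longrightarrow> F (int i) = F 0" for i
      by (induction i) (auto simp: add.commute)
    then have "F (int m) = F 0"
      by simp
    moreover have "F (int m) = F 0 + 1"
      using F_translate[of 0 1] by simp
    ultimately show False
      by simp
  qed
  then obtain i where "i < m" "F (int i) \<noteq> F (int i + 1)"
    by blast
  moreover have "F (int i) \<le> F (int i + 1)"
    by (rule F_mono) simp
  ultimately show ?thesis
    using that by simp
qed

lemma f_not_constant:
  assumes "1 \<le> k"
  shows "\<exists>x\<in>Cverts m. \<exists>y\<in>Cverts m. f x \<noteq> f y"
proof -
  obtain i where i: "i < m" "F (int i) < F (int i + 1)"
    by (rule F_not_constant)
  have "F (int i + 1) \<le> F (int i + int k)"
    using assms by (intro F_mono) auto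
  then have "F (int i + 1) < F (int i) + 1"
    using F_add_k_le_greedy[of "int i"] greedy_less[OF frac_F_in_W[of "int i"]] by linarith
  then have "cdist (frac (F (int i))) (frac (F (int i + 1))) \<noteq> 0"
    using i by (simp add: cdist_frac_frac)
  moreover have "f (real i / real m) = frac (F (int i))"
    "f (real (Suc i mod m) / real m) = frac (F (int i + 1))"
    using f_grid[of i] f_grid_mod[of "Suc i"] by (simp_all add: add.commute)
  ultimately have "f (real i / real m) \<noteq> f (real (Suc i mod m) / real m)"
    by auto
  moreover have "real i / real m \<in> Cverts m" "real (Suc i mod m) / real m \<in> Cverts m"
    using i m_pos by (auto simp: Cverts_def)
  ultimately show ?thesis
    by blast
qed

lemma f_cyclic_hom:
  assumes "1 \<le> k"
  shows "cyclic_hom (Cverts m) (Cedge m k) W (induced E W) f"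
  unfolding cyclic_hom_def
proof (intro conjI ballI allI impI)
  fix x assume "x \<in> Cverts m"
  then show "f x \<in> W"
    by (auto simp: Cverts_def f_grid frac_F_in_W)
qed (use f_maps_edges f_preserves_cw_le f_not_constant[OF assms] in auto)

text \<open>If \<open>m \<le> 2 k\<close>, then \<open>F k\<close> is reached from \<open>F 0\<close> and \<open>F m = F 0 + 1\<close> from \<open>F k\<close>,
  giving opposite edges between \<open>frac (F 0)\<close> and \<open>frac (F k)\<close>.\<close>

lemma double_k_less_m:
  assumes "1 \<le> k" "k < m"
  shows "2 * k < m"
proof (rule ccontr)
  assume "\<not> 2 * k < m"
  have F_m: "F (int m) = F 0 + 1"
    using F_translate[of 0 1] by simp
  have k_in: "F (0 + int k) \<in> out_lifts (F 0)"
    using assms by (intro F_in_out_lifts) auto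
  have m_in: "F (int k + int (m - k)) \<in> out_lifts (F (int k))"
    using assms \<open>\<not> 2 * k < m\<close> by (intro F_in_out_lifts) auto
  have mk: "int k + int (m - k) = int m"
    using assms by simp
  have "F (int k) < F 0 + 1"
    using k_in by (auto simp: out_lifts_def)
  then have "E (frac (F (int k))) (frac (F 0))"
    using m_in F_m unfolding mk by (auto simp: out_lifts_def frac_1_eq)
  moreover have "F (int k) \<noteq> F 0"
    using m_in F_m unfolding mk by (auto simp: out_lifts_def)
  then have "E (frac (F 0)) (frac (F (int k)))"
    using k_in by (auto simp: out_lifts_def)
  ultimately show False
    using cyclic_graph_asym[OF cyclic] by blast
qed

end

context greedy_lift
begin

lemma greedy_displacement_le_wf:
  assumes "v \<in> W"
  shows "(greedy ^^ m) v - v \<le> real m * wf V E + 3"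
proof -
  have frac_v: "frac v \<in> W"
    using W_unit_interval[OF assms] assms by simp
  have wf_nonneg: "0 \<le> wf V E"
    using assms W_subset wf_nonneg by blast
  show ?thesis
  proof (cases "(greedy ^^ m) v - v < 3")
    case True
    then show ?thesis
      using wf_nonneg by (simp add: add_increasing)
  next
    case False
    define k where "k = nat \<lfloor>(greedy ^^ m) v - v\<rfloor> - 2"
    have k: "real k + 2 \<le> (greedy ^^ m) v - v" "(greedy ^^ m) v - v < real k + 3" "1 \<le> k"
      using False unfolding k_def by linarith+
    have "(greedy ^^ m) v - v \<le> real m"
      using greedy_pow_le[OF frac_v, of m] by linarith
    then have "0 < m" "k < m"
      using k by linarith+
    then interpret greedy_hom V E W v m k
      using assms k(1) by unfold_locales
    have "real k / real m \<le> wf_fin W (induced E W)"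
      using hom_fraction_le_wf_fin double_k_less_m f_cyclic_hom k(3) \<open>k < m\<close> by blast
    also have "\<dots> \<le> wf V E"
      using wf_fin_le_wf finite_W W_subset assms by blast
    finally have "real k \<le> real m * wf V E"
      using \<open>0 < m\<close> by (simp add: field_simps)
    then show ?thesis
      using k by linarith
  qed
qed

end

theorem gamma_le_wf:
  assumes "cyclic_graph V E" "v \<in> V"
  shows "gamma V E m v \<le> real m * wf V E + 3"
proof (rule gamma_le_Sup_walk_length[OF assms(2)])
  fix w assume w: "w 0 = v" "is_walk V E m w"
  define W where "W = w ` {..m}"
  have "W \<subseteq> V"
    using is_walk_in[OF _ w(2)] w(1) assms(2)
    unfolding W_def by auto
  moreover have "finite W"
    by (simp add: W_def)
  ultimately interpret greedy_lift V E W
    using assms(1) by unfold_locales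
  have "v \<in> W"
    using w(1) by (force simp: W_def)
  moreover have "is_walk W E m w"
    using w(2) by (auto simp: is_walk_def W_def)
  ultimately have "walk_length m w \<le> (greedy ^^ m) v - v"
    using walk_length_le_greedy w(1) by blast
  then show "walk_length m w \<le> real m * wf V E + 3"
    using greedy_displacement_le_wf[OF \<open>v \<in> W\<close>, of m] by linarith
qed

section \<open>Walks from a homomorphism\<close>

lemma has_dcycle_Cedge:
  assumes "1 \<le> k" "k < n"
  shows "has_dcycle (Cverts n) (Cedge n k)"
proof -
  let ?R = "{(a, b). Cedge n k a b}"
  have edge: "(real j / real n, real ((j + 1) mod n) / real n) \<in> ?R" if "j < n" for j
    unfolding Cedge_def using that assms by blast
  have "(0, real (Suc j) / real n) \<in> ?R\<^sup>+" if "Suc j < n" for j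
    using that
  proof (induction j)
    case 0
    then show ?case
      using edge[of 0] by auto
  next
    case (Suc j)
    then show ?case
      using edge[of "Suc j"] by (auto intro: trancl_into_trancl)
  qed
  from this[of "n - 2"] have "(0, real (n - 1) / real n) \<in> ?R\<^sup>+"
    using assms by (simp add: Suc_diff_Suc numeral_2_eq_2)
  moreover have "(real (n - 1) / real n, 0) \<in> ?R"
    using edge[of "n - 1"] assms by simp
  ultimately have "(0, 0) \<in> ?R\<^sup>+"
    by (rule trancl_into_trancl)
  moreover have "0 \<in> Cverts n"
    unfolding Cverts_def using assms by force
  ultimately show ?thesis
    unfolding has_dcycle_def by blast
qed

lemma ex_crossing_nat: "P (0::nat) \<Longrightarrow> \<not> P k \<Longrightarrow> \<exists>t<k. P t \<and> \<not> P (Suc t)"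
  by (induction k) (auto intro: less_SucI)

locale hom_lift =
  fixes V :: "real set" and E :: "real \<Rightarrow> real \<Rightarrow> bool" and W :: "real set"
    and n k :: nat and f :: "real \<Rightarrow> real"
  assumes cyclic: "cyclic_graph V E" and W_subset: "W \<subseteq> V"
    and hom: "cyclic_hom (Cverts n) (Cedge n k) W (induced E W) f"
    and double_k_less_n: "2 * k < n" and k_pos: "1 \<le> k"
begin

lemma n_pos: "0 < n"
  using double_k_less_n by simp

lemma k_less_n: "k < n"
  using double_k_less_n by simp

definition p :: "nat \<Rightarrow> real" where
  "p t = f (real (t mod n) / real n)"

lemma grid_in_Cverts: "real (t mod n) / real n \<in> Cverts n"
  using n_pos by (auto simp: Cverts_def)

lemma p_in_W: "p t \<in> W"
  using hom grid_in_Cverts unfolding cyclic_hom_def p_def by blast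

lemma p_in_V: "p t \<in> V"
  using p_in_W W_subset by blast

lemma p_unit_interval: "p t \<in> {0..<1}"
  using p_in_V cyclic_graph_subset[OF cyclic] by blast

lemma p_periodic: "p (t + c * n) = p t"
  unfolding p_def by simp

lemma p_edge:
  assumes "1 \<le> t" "t \<le> k"
  shows "E (p a) (p (a + t)) \<or> p a = p (a + t)"
proof -
  have "Cedge n k (real (a mod n) / real n) (real ((a + t) mod n) / real n)"
    unfolding Cedge_def using assms n_pos
    by (intro exI[of _ "a mod n"] exI[of _ t]) (auto simp: mod_add_left_eq)
  then show ?thesis
    using hom unfolding cyclic_hom_def p_def induced_def by blast
qed

lemma p_cw_le:
  assumes "Suc t < n"
  shows "cw_le (p a) (p (a + t)) (p (a + Suc t))"
proof -
  have grid: "real (b mod n) / real n \<in> {0..<1}" for b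
    using n_pos by (simp add: field_simps)
  have "cw_le (real (a mod n) / real n) (real ((a + t) mod n) / real n) (real ((a + Suc t) mod n) / real n)"
    using cdist_grid_mod[OF n_pos, of t a] cdist_grid_mod[OF n_pos, of "Suc t" a] assms
    by (subst cw_le_iff_cdist[OF grid grid grid]) (simp add: divide_right_mono)
  then show ?thesis
    using hom grid_in_Cverts unfolding cyclic_hom_def p_def by blast
qed

lemma p_not_constant: "\<exists>u<n. p u \<noteq> p (Suc u)"
proof (rule ccontr)
  assume "\<not> ?thesis"
  then have "t \<le> n \<longrightarrow> p t = p 0" for t
    by (induction t) auto
  then have "f (real i / real n) = f 0" if "i < n" for i
    using that less_imp_le[OF that] unfolding p_def by fastforce
  moreover have "\<exists>x\<in>Cverts n. \<exists>y\<in>Cverts n. f x \<noteq> f y"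
    using hom has_dcycle_Cedge[OF k_pos k_less_n] unfolding cyclic_hom_def by blast
  ultimately show False
    unfolding Cverts_def by auto
qed

definition lift :: "nat \<Rightarrow> real" where
  "lift t = p 0 + (\<Sum>u<t. cdist (p u) (p (Suc u)))"

lemma lift_Suc: "lift (Suc t) = lift t + cdist (p t) (p (Suc t))"
  by (simp add: lift_def)

lemma frac_lift: "frac (lift t) = p t"
proof (induction t)
  case 0
  then show ?case
    using p_unit_interval by (simp add: lift_def)
next
  case (Suc t)
  then show ?case
    using frac_add_cdist[OF p_unit_interval, of "lift t"] by (simp add: lift_Suc)
qed

lemma lift_mono: "t \<le> t' \<Longrightarrow> lift t \<le> lift t'"
proof (induction t' rule: dec_induct)
  case (step t')
  then show ?case
    using cdist_nonneg[of "p t'" "p (Suc t')"] by (simp add: lift_Suc)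
qed simp

lemma lift_Suc_less: "lift (Suc t) < lift t + 1"
  using cdist_less_1 by (simp add: lift_Suc)

definition winding :: real where
  "winding = lift n - lift 0"

lemma lift_add_mult_n: "lift (t + c * n) = lift t + real c * winding"
proof -
  have lift_add_n: "lift (t + n) = lift t + winding" for t
  proof (induction t)
    case 0
    then show ?case
      by (simp add: winding_def)
  next
    case (Suc t)
    then show ?case
      using p_periodic[of t 1] p_periodic[of "Suc t" 1] by (simp add: lift_Suc)
  qed
  show ?thesis
  proof (induction c)
    case (Suc c)
    have "lift (t + Suc c * n) = lift ((t + c * n) + n)"
      by (simp add: algebra_simps)
    then show ?case
      using Suc lift_add_n[of "t + c * n"] by (simp add: distrib_right)
  qed simp
qed

text \<open>The lifted cycle closes up, so it winds an integral number of times, and at least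
  once since the homomorphism is not constant.\<close>

lemma winding_ge_1: "1 \<le> winding"
proof -
  obtain u where u: "u < n" "p u \<noteq> p (Suc u)"
    using p_not_constant by blast
  then have "0 < cdist (p u) (p (Suc u))"
    using cdist_eq_0_iff[OF p_unit_interval p_unit_interval] cdist_nonneg[of "p u" "p (Suc u)"]
    by (metis less_eq_real_def)
  also have "cdist (p u) (p (Suc u)) \<le> (\<Sum>v<n. cdist (p v) (p (Suc v)))"
    using u by (intro member_le_sum) (auto simp: cdist_nonneg)
  finally have "0 < winding"
    unfolding winding_def lift_def by simp
  moreover have "frac (lift n) = frac (lift 0)"
    using frac_lift p_periodic[of 0 1] by simp
  then obtain j where "lift n = lift 0 + of_int j"
    by (rule frac_eqE)
  ultimately show ?thesis
    unfolding winding_def by simp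
qed

text \<open>If the lift advanced a full turn within \<open>k\<close> steps, the first point \<open>a + t + 1\<close> past
  the turn would either violate the cyclic order or coincide with \<open>p a\<close>, and then
  \<open>p a \<rightarrow> p (a + t) \<rightarrow> p a\<close> would be a pair of opposite edges.\<close>

lemma lift_advance_less_1: "lift (a + k) - lift a < 1"
proof (rule ccontr)
  assume "\<not> ?thesis"
  then obtain t where t: "t < k" "lift (a + t) - lift a < 1" "\<not> lift (a + Suc t) - lift a < 1"
    using ex_crossing_nat[of "\<lambda>t. lift (a + t) - lift a < 1" k] by auto
  have t_pos: "1 \<le> t"
    using t lift_Suc_less[of a] by (cases t) auto
  have mono: "lift a \<le> lift (a + t)"
    by (rule lift_mono) simp
  have step: "lift (a + Suc t) < lift (a + t) + 1"
    using lift_Suc_less[of "a + t"] by simp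
  have to_t: "cdist (p a) (p (a + t)) = lift (a + t) - lift a"
    using cdist_frac_frac[of "lift a" "lift (a + t)"] mono t frac_lift by simp
  have to_Suc_t: "cdist (p a) (p (a + Suc t)) = lift (a + Suc t) - lift a - 1"
    using cdist_frac_frac[of "lift a + 1" "lift (a + Suc t)"] t step frac_lift by (simp add: frac_1_eq)
  have "p a = p (a + Suc t) \<or> cdist (p a) (p (a + t)) \<le> cdist (p a) (p (a + Suc t))"
    using p_cw_le[of t a] t k_less_n cw_le_iff_cdist[OF p_unit_interval p_unit_interval p_unit_interval]
    by simp
  then show False
  proof
    assume closes: "p a = p (a + Suc t)"
    then have "lift a < lift (a + t)"
      using to_Suc_t t step mono by simp
    then have ne: "p a \<noteq> p (a + t)"
      using to_t by auto
    have "E (p a) (p (a + t))"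
      using p_edge[OF t_pos, of a] t ne by auto
    moreover have "E (p (a + t)) (p a)"
      using p_edge[of 1 "a + t"] k_pos closes ne by simp
    ultimately show False
      using cyclic_graph_asym[OF cyclic] by blast
  qed (use to_t to_Suc_t step in linarith)
qed

definition sample :: "nat \<Rightarrow> real" where
  "sample j = p (j * k)"

lemma sample_in_V: "sample j \<in> V"
  unfolding sample_def by (rule p_in_V)

lemma sample_unit_interval: "sample j \<in> {0..<1}"
  unfolding sample_def by (rule p_unit_interval)

lemma sample_step: "E (sample j) (sample (Suc j)) \<or> sample j = sample (Suc j)"
  using p_edge[OF k_pos, of "j * k"] unfolding sample_def by (simp add: algebra_simps)

lemma sum_cdist_sample:
  "(\<Sum>t<L. cdist (sample (u + t)) (sample (Suc (u + t)))) = lift ((u + L) * k) - lift (u * k)"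
proof -
  have step: "cdist (sample j) (sample (Suc j)) = lift (Suc j * k) - lift (j * k)" for j
  proof -
    have "lift (j * k) \<le> lift (j * k + k)"
      by (rule lift_mono) simp
    then show ?thesis
      using cdist_frac_frac[of "lift (j * k)" "lift (j * k + k)"] lift_advance_less_1[of "j * k"] frac_lift
      unfolding sample_def by (simp add: algebra_simps)
  qed
  show ?thesis
  proof (induction L)
    case (Suc L)
    then show ?case
      using step[of "u + L"] by (simp add: add.assoc)
  qed simp
qed

lemma lift_sample_advance: "real (L div n) * real k \<le> lift ((u + L) * k) - lift (u * k)"
proof -
  have "u * k + L div n * k * n \<le> (u + L) * k"
    by (simp add: algebra_simps)
  then have "lift (u * k + L div n * k * n) \<le> lift ((u + L) * k)"
    by (rule lift_mono)
  moreover have "real (L div n * k) \<le> real (L div n * k) * winding"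
    using mult_left_mono[OF winding_ge_1, of "real (L div n * k)"] by simp
  ultimately show ?thesis
    using lift_add_mult_n[of "u * k" "L div n * k"] by simp
qed

text \<open>A vertex \<open>v\<close> off the sampled walk with no edge into it would stay ahead of it: the
  clockwise distance from \<open>v\<close> grows by every step of the walk, contradicting periodicity.\<close>

lemma cdist_to_sample_Suc:
  assumes "v \<in> V" "\<And>j. v \<noteq> sample j" "\<not> E v (sample (Suc j))"
  shows "cdist v (sample (Suc j)) = cdist v (sample j) + cdist (sample j) (sample (Suc j))"
proof (cases "sample j = sample (Suc j)")
  case False
  have v: "v \<in> {0..<1}"
    using assms(1) cyclic_graph_subset[OF cyclic] by blast
  have edge: "E (sample j) (sample (Suc j))"
    using False sample_step by blast
  have "\<not> cdist (sample j) v \<le> cdist (sample j) (sample (Suc j))"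
  proof
    assume "cdist (sample j) v \<le> cdist (sample j) (sample (Suc j))"
    then have "cw_lt (sample j) v (sample (Suc j))"
      unfolding cw_lt_def using assms(2)[of j] assms(2)[of "Suc j"] False
        cw_le_iff_cdist[OF sample_unit_interval v sample_unit_interval] by auto
    then show False
      using cyclic_graph_between[OF cyclic sample_in_V sample_in_V assms(1) edge] assms(3) by blast
  qed
  then show ?thesis
    using assms(2)[of j] by (intro cdist_via[OF sample_unit_interval sample_unit_interval v]) auto
qed simp

lemma enters_samples:
  assumes "v \<in> V"
  obtains j where "v = sample j \<or> E v (sample (Suc j))"
proof (rule ccontr)
  assume "\<not> thesis"
  then have off: "\<And>j. v \<noteq> sample j" and no_edge: "\<And>j. \<not> E v (sample (Suc j))"
    using that by auto
  have "cdist v (sample j) = cdist v (sample 0) + (\<Sum>t<j. cdist (sample t) (sample (Suc t)))" for j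
    by (induction j) (simp_all add: cdist_to_sample_Suc[OF assms off no_edge])
  from this[of n] have "(\<Sum>t<n. cdist (sample t) (sample (Suc t))) = 0"
    using p_periodic[of 0 k] unfolding sample_def by (simp add: mult.commute)
  moreover have "(\<Sum>t<n. cdist (sample t) (sample (Suc t))) = lift (n * k) - lift 0"
    using sum_cdist_sample[where L = n and u = 0] by simp
  moreover have "real k \<le> lift (n * k) - lift 0"
    using lift_sample_advance[of n 0] n_pos by simp
  ultimately show False
    using k_pos by simp
qed

lemma gamma_ge_samples:
  assumes "v \<in> V"
  shows "real ((m - 1) div n) * real k \<le> gamma V E m v"
proof -
  obtain j where j: "v = sample j \<or> E v (sample (Suc j))"
    using enters_samples[OF assms] by blast
  define w where "w i = (if i = 0 then v else sample (j + i))" for i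
  have "is_walk V E m w"
    unfolding is_walk_def
  proof (intro allI impI conjI)
    fix i
    show "w (Suc i) \<in> V"
      by (simp add: w_def sample_in_V)
    show "w (Suc i) = w i \<or> E (w i) (w (Suc i))"
      using j sample_step[of "j + i"] by (cases i) (auto simp: w_def)
  qed
  then have "walk_length m w \<le> gamma V E m v"
    by (intro walk_length_le_gamma) (simp add: w_def)
  moreover have "real ((m - 1) div n) * real k \<le> walk_length m w"
  proof (cases m)
    case (Suc m')
    have "walk_length m w = (\<Sum>t<m'. cdist (sample (Suc j + t)) (sample (Suc (Suc j + t)))) + cdist v (w 1)"
      unfolding Suc walk_length_def sum.lessThan_Suc_shift by (simp add: w_def)
    also have "\<dots> = lift ((Suc j + m') * k) - lift (Suc j * k) + cdist v (w 1)"
      by (simp only: sum_cdist_sample)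
    finally show ?thesis
      using lift_sample_advance[of m' "Suc j"] cdist_nonneg[of v "w 1"] Suc by simp
  qed (simp add: walk_length_def)
  ultimately show ?thesis
    by linarith
qed

end

lemma gamma_nonneg: "v \<in> V \<Longrightarrow> 0 \<le> gamma V E m v"
  using walk_length_le_gamma[of "\<lambda>_. v" v V E m] by (simp add: is_walk_def walk_length_def)

lemma eventually_less_gamma_ratio:
  assumes "cyclic_graph V E" "v \<in> V" "W \<subseteq> V" "2 * k < n"
    "cyclic_hom (Cverts n) (Cedge n k) W (induced E W) f" "a < real k / real n"
  shows "eventually (\<lambda>m. a < gamma V E m v / real m) sequentially"
proof (cases "k = 0")
  case True
  then show ?thesis
    using assms(2,6) gamma_nonneg by (intro always_eventually) (auto intro: less_le_trans)
next
  case False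
  then interpret hom_lift V E W n k f
    using assms by unfold_locales auto
  define c where "c = real k * (real n + 1) / real n"
  have "(\<lambda>m. real k / real n - c / real m) \<longlonglongrightarrow> real k / real n"
    using tendsto_diff[OF tendsto_const lim_const_over_n[of c]] by simp
  then have "eventually (\<lambda>m. a < real k / real n - c / real m) sequentially"
    using assms(6) by (rule order_tendstoD)
  then show ?thesis
    using eventually_ge_at_top[of 1]
  proof eventually_elim
    case (elim m)
    have "real k / real n - c / real m = ((real m - 1) / real n - 1) * real k / real m"
      using elim(2) n_pos unfolding c_def by (simp add: field_simps)
    also have "\<dots> \<le> real ((m - 1) div n) * real k / real m"
      using real_div_nat_ge[OF n_pos, of "m - 1"] elim(2)
      by (simp add: of_nat_diff divide_right_mono mult_right_mono)
    also have "\<dots> \<le> gamma V E m v / real m"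
      using gamma_ge_samples[OF assms(2)] by (simp add: divide_right_mono)
    finally show ?case
      using elim(1) by linarith
  qed
qed

lemma eventually_gamma_ratio_less:
  assumes "cyclic_graph V E" "v \<in> V" "wf V E < a"
  shows "eventually (\<lambda>m. gamma V E m v / real m < a) sequentially"
proof -
  have "(\<lambda>m. wf V E + 3 / real m) \<longlonglongrightarrow> wf V E"
    using tendsto_add[OF tendsto_const lim_const_over_n[of 3]] by simp
  then have "eventually (\<lambda>m. wf V E + 3 / real m < a) sequentially"
    using assms(3) by (rule order_tendstoD)
  then show ?thesis
    using eventually_gt_at_top[of 0]
  proof eventually_elim
    case (elim m)
    then show ?case
      using gamma_le_wf[OF assms(1,2), of m] by (simp add: field_simps)
  qed
qed

theorem mainTheorem8:
  fixes V :: "real set" and E :: "real \<Rightarrow> real \<Rightarrow> bool" and v :: real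
  assumes "cyclic_graph V E" and "v \<in> V"
  shows "(\<lambda>m. gamma V E m v / real m) \<longlonglongrightarrow> wf V E"
proof (rule order_tendstoI)
  fix a assume "a < wf V E"
  then obtain W n k f where "W \<subseteq> V" "2 * k < n"
    "cyclic_hom (Cverts n) (Cedge n k) W (induced E W) f" "a < real k / real n"
    using less_wf_hom_fraction[OF _ assms(2)] by metis
  then show "eventually (\<lambda>m. a < gamma V E m v / real m) sequentially"
    using eventually_less_gamma_ratio assms by blast
next
  fix a assume "wf V E < a"
  then show "eventually (\<lambda>m. gamma V E m v / real m < a) sequentially"
    using eventually_gamma_ratio_less assms by blast
qed

end
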